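(* For every $\gamma\geq1$ and every $n\in\mathbb{N}^*$, the open Euclidean unit ball $B_n(0,1)\subseteq\mathbb{R}^n$ admits the structure of a Lip-$\gamma$ manifold.
   Context: A Lip-$\gamma$ manifold is an $n$-dimensional topological manifold $M$ with a countable family $(U_i,\phi_i)_{i\in I}$ where $U_i\subseteq M$ is open and $\phi_i:M\to\mathbb{R}^n$ is compactly supported with $\phi_i|_{U_i}$ a homeomorphism onto its image, such that: $(U_i)$ is a precompact locally finite cover of $M$; $\phi_i(U_i)=B_n(0,1)$; there exists $\delta\in(0,1)$ such that the sets $(\phi_i|_{U_i})^{-1}(B_n(0,1-\delta))$ cover $M$; there exists $L>0$ such that each $\phi_j\circ(\phi_i|_{U_i})^{-1}:B_n(0,1)\to\mathbb{R}^n$ is Lip-$\gamma$ (in the sense of Stein: $m$ times differentiable, $m$ the integer with $0<\gamma-m\le1$, with derivatives up to order $m$ bounded and Taylor remainders $R_k(x,y)$ of order $k$ bounded by $L\|x-y\|^{\gamma-k}$) with norm $\leq L$. *)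

theory Defs
  imports "HOL-Analysis.Analysis"
begin

text \<open>The integer m attached to gamma: the unique integer with 0 < gamma - m \<le> 1.\<close>
definition lip_order :: "real \<Rightarrow> nat" where
  "lip_order \<gamma> = nat (\<lceil>\<gamma>\<rceil> - 1)"

text \<open>Lip-gamma in the sense of Stein, with norm at most L, on a set U.
  F k x is the k-th derivative of f at x, viewed as a k-multilinear map acting on
  lists of k vectors.\<close>
definition lip_gamma_on ::
  "real \<Rightarrow> real \<Rightarrow> ('a::euclidean_space) set \<Rightarrow> ('a \<Rightarrow> 'b::real_normed_vector) \<Rightarrow> bool" where
  "lip_gamma_on \<gamma> L U f \<longleftrightarrow>
    (\<exists>F :: nat \<Rightarrow> 'a \<Rightarrow> 'a list \<Rightarrow> 'b.
      (\<forall>x\<in>U. F 0 x [] = f x) \<and>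
      (\<forall>k<lip_order \<gamma>. \<forall>hs. length hs = k \<longrightarrow>
          (\<forall>x\<in>U. ((\<lambda>y. F k y hs) has_derivative (\<lambda>v. F (Suc k) x (hs @ [v]))) (at x within U))) \<and>
      (\<forall>k\<le>lip_order \<gamma>. \<forall>x\<in>U. \<forall>hs. length hs = k \<and> (\<forall>h\<in>set hs. norm h \<le> 1)
          \<longrightarrow> norm (F k x hs) \<le> L) \<and>
      (\<forall>k\<le>lip_order \<gamma>. \<forall>x\<in>U. \<forall>y\<in>U. \<forall>hs. length hs = k \<and> (\<forall>h\<in>set hs. norm h \<le> 1)
          \<longrightarrow> norm (F k y hs
                 - (\<Sum>j\<le>lip_order \<gamma> - k. (1 / fact j) *\<^sub>R F (k + j) x (hs @ replicate j (y - x))))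
              \<le> L * norm (x - y) powr (\<gamma> - real k)))"

definition lip_gamma_manifold ::
  "real \<Rightarrow> 'm topology \<Rightarrow> 'i set \<Rightarrow> ('i \<Rightarrow> 'm set) \<Rightarrow> ('i \<Rightarrow> 'm \<Rightarrow> 'a::euclidean_space) \<Rightarrow> bool" where
  "lip_gamma_manifold \<gamma> X I U \<phi> \<longleftrightarrow>
     Hausdorff_space X \<and> second_countable X \<and>
     countable I \<and>
     (\<forall>i\<in>I. openin X (U i)) \<and>
     (\<forall>i\<in>I. continuous_map X euclidean (\<phi> i)) \<and>
     (\<forall>i\<in>I. \<exists>K. compactin X K \<and> (\<forall>x\<in>topspace X - K. \<phi> i x = 0)) \<and>
     (\<forall>i\<in>I. homeomorphic_map (subtopology X (U i)) (top_of_set (ball 0 1)) (\<phi> i)) \<and>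
     (\<forall>i\<in>I. compactin X (X closure_of (U i))) \<and>
     (\<Union>i\<in>I. U i) = topspace X \<and>
     (\<forall>x\<in>topspace X. \<exists>V. openin X V \<and> x \<in> V \<and> finite {i\<in>I. U i \<inter> V \<noteq> {}}) \<and>
     (\<exists>\<delta>. 0 < \<delta> \<and> \<delta> < 1 \<and>
        topspace X \<subseteq> (\<Union>i\<in>I. {x\<in>U i. \<phi> i x \<in> ball 0 (1 - \<delta>)})) \<and>
     (\<exists>L>0. \<forall>i\<in>I. \<forall>j\<in>I. lip_gamma_on \<gamma> L (ball 0 1) (\<phi> j \<circ> inv_into (U i) (\<phi> i)))"

end

theory Submission
  imports Defs "HOL-Computational_Algebra.Polynomial"
begin

(* The ball is homeomorphic to R^n and the Lip-gamma manifold property is transported along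
   homeomorphisms, so it suffices to treat R^n.  Let m = lip_order gamma.  From a C^(m+1)
   polynomial smooth step one builds a plateau function in one variable and from it a cutoff
   h : R^n -> R^n that is the identity on the unit ball, vanishes outside a bounded set and has
   bounded derivatives up to order m+1.  The charts are h((x - c)/n) on the balls of radius n
   around the points c of the integer lattice Z^n.  Every transition map is then a translate
   y |-> h(y + a) restricted to the unit ball, and Taylor's formula with Lagrange remainder
   bounds all of these by one and the same Lip-gamma constant. *)

definition deriv_chain :: "nat \<Rightarrow> (nat \<Rightarrow> real \<Rightarrow> real) \<Rightarrow> bool" where
  "deriv_chain N s \<longleftrightarrow> (\<forall>k<N. \<forall>t. (s k has_real_derivative s (Suc k) t) (at t))"

lemma has_field_derivative_Un:
  assumes "(f has_field_derivative D) (at x within S)" and "(f has_field_derivative D) (at x within T)"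
  shows "(f has_field_derivative D) (at x within (S \<union> T))"
  using assms unfolding has_field_derivative_iff by (simp add: Lim_within_Un)

lemma has_field_derivative_closed_piece:
  fixes f g :: "real \<Rightarrow> real"
  assumes "closed S" and "\<And>y. y \<in> S \<Longrightarrow> g y = f y"
    and "t \<in> S \<Longrightarrow> (f has_field_derivative D) (at t within S)"
  shows "(g has_field_derivative D) (at t within S)"
proof (cases "t \<in> S")
  case True
  show ?thesis
    by (rule has_field_derivative_transform_within[of f D t S 1]) (use True assms in auto)
next
  case False
  then have "at t within S = bot"
    using not_in_closure_trivial_limitI assms(1) by (metis closure_closed trivial_limit_def)
  then show ?thesis by simp
qed

lemma has_field_derivative_comp_clamp:
  fixes f f' :: "real \<Rightarrow> real"
  assumes f': "\<And>x. (f has_field_derivative f' x) (at x)" and "f' 0 = 0" and "f' 1 = 0"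
  shows "((\<lambda>t. f (max 0 (min 1 t))) has_field_derivative f' (max 0 (min 1 t))) (at t)"
proof -
  let ?g = "\<lambda>t. f (max 0 (min 1 t))" and ?D = "f' (max 0 (min 1 t))"
  have "(?g has_field_derivative ?D) (at t within {..0})"
    by (rule has_field_derivative_closed_piece[where f="\<lambda>_. f 0"]) (use assms in auto)
  moreover have "(?g has_field_derivative ?D) (at t within {0..1})"
    by (rule has_field_derivative_closed_piece[where f=f]) (auto intro: has_field_derivative_at_within f')
  moreover have "(?g has_field_derivative ?D) (at t within {1..})"
    by (rule has_field_derivative_closed_piece[where f="\<lambda>_. f 1"]) (use assms in auto)
  ultimately have "(?g has_field_derivative ?D) (at t within ({..0} \<union> {0..1} \<union> {1..}))"
    by (intro has_field_derivative_Un)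
  moreover have "{..0} \<union> {0..1} \<union> {1..} = (UNIV :: real set)"
    by auto
  ultimately show ?thesis
    by simp
qed

lemma poly_antiderivative: "\<exists>P::real poly. pderiv P = q"
proof
  show "pderiv (\<Sum>i\<le>degree q. monom (coeff q i / real (Suc i)) (Suc i)) = q"
    using higher_pderiv_sum[of 1 "\<lambda>i. monom (coeff q i / real (Suc i)) (Suc i)" "{..degree q}"]
    by (subst (2) poly_as_sum_of_monoms[symmetric]) (simp add: pderiv_monom)
qed

lemma power_dvd_pderiv:
  fixes p q :: "'a::idom poly"
  assumes "p ^ Suc M dvd q"
  shows "p ^ M dvd pderiv q"
proof -
  obtain r where r: "q = p ^ Suc M * r"
    using assms by (elim dvdE)
  have "p ^ M dvd p ^ Suc M * pderiv r"
    by (intro dvd_mult2 le_imp_power_dvd) simp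
  moreover have "p ^ M dvd r * (smult (of_nat (Suc M)) (p ^ M) * pderiv p)"
    by (intro dvd_mult dvd_mult2 dvd_smult) simp
  ultimately show ?thesis
    unfolding r pderiv_mult pderiv_power_Suc by (rule dvd_add)
qed

lemma power_dvd_higher_pderiv:
  fixes p q :: "'a::idom poly"
  assumes "p ^ M dvd q" and "j \<le> M"
  shows "p ^ (M - j) dvd (pderiv ^^ j) q"
  using assms(2)
proof (induction j)
  case 0
  then show ?case using assms(1) by simp
next
  case (Suc j)
  then have "p ^ Suc (M - Suc j) dvd (pderiv ^^ j) q"
    by (simp add: Suc_diff_Suc)
  then show ?case
    by (simp add: power_dvd_pderiv)
qed

lemma poly_higher_pderiv_root:
  fixes q :: "'a::idom poly"
  assumes "[:-a, 1:] ^ M dvd q" and "j < M"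
  shows "poly ((pderiv ^^ j) q) a = 0"
proof -
  have "[:-a, 1:] ^ Suc (M - Suc j) dvd (pderiv ^^ j) q"
    using power_dvd_higher_pderiv[OF assms(1), of j] assms(2) by (simp add: Suc_diff_Suc)
  then have "[:-a, 1:] dvd (pderiv ^^ j) q"
    by (meson dvd_power dvd_trans zero_less_Suc)
  then show ?thesis
    by (simp add: poly_eq_0_iff_dvd)
qed

lemma poly_smooth_step_exists:
  "\<exists>S::real poly. poly S 0 = 0 \<and> poly S 1 = 1 \<and>
     (\<forall>k a. 1 \<le> k \<longrightarrow> k \<le> M \<longrightarrow> a = 0 \<or> a = 1 \<longrightarrow> poly ((pderiv ^^ k) S) a = 0)"
proof -
  define q :: "real poly" where "q = [:0, 1:] ^ M * [:-1, 1:] ^ M"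
  obtain P where P: "pderiv P = q"
    using poly_antiderivative by blast
  have "poly P 1 \<noteq> poly P 0"
  proof -
    obtain x where x: "0 < x" "x < 1" "poly P 1 - poly P 0 = (1 - 0) * poly q x"
      using poly_MVT[of 0 1 P] P by auto
    have "poly q x \<noteq> 0"
      using x(1,2) by (auto simp: q_def)
    then show ?thesis
      using x(3) by simp
  qed
  define S where "S = smult (1 / (poly P 1 - poly P 0)) (P - [:poly P 0:])"
  have "poly S 0 = 0" "poly S 1 = 1"
    using \<open>poly P 1 \<noteq> poly P 0\<close> by (simp_all add: S_def)
  moreover have "poly ((pderiv ^^ k) S) a = 0" if k: "1 \<le> k" "k \<le> M" and a: "a = 0 \<or> a = 1" for k a
  proof -
    obtain j where j: "k = Suc j" "j < M"
      using k by (cases k) auto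
    have "(pderiv ^^ k) S = smult (1 / (poly P 1 - poly P 0)) ((pderiv ^^ j) q)"
      unfolding j funpow_Suc_right o_apply
      by (simp add: S_def pderiv_smult pderiv_diff P higher_pderiv_smult)
    moreover have "[:-a, 1:] ^ M dvd q"
      using a by (auto simp: q_def)
    then have "poly ((pderiv ^^ j) q) a = 0"
      using j(2) by (rule poly_higher_pderiv_root)
    ultimately show ?thesis
      by simp
  qed
  ultimately show ?thesis
    by blast
qed

lemma smooth_step_exists:
  "\<exists>u. deriv_chain M u \<and> (\<exists>B. \<forall>k\<le>M. \<forall>t. \<bar>u k t\<bar> \<le> B) \<and>
     (\<forall>t\<le>0. u 0 t = 0) \<and> (\<forall>t\<ge>1. u 0 t = 1) \<and>
     (\<forall>k t. 1 \<le> k \<longrightarrow> k \<le> M \<longrightarrow> t \<le> 0 \<or> 1 \<le> t \<longrightarrow> u k t = 0)"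
proof -
  obtain S :: "real poly" where S01: "poly S 0 = 0" "poly S 1 = 1"
    and root: "\<And>k a. 1 \<le> k \<Longrightarrow> k \<le> M \<Longrightarrow> a = 0 \<or> a = 1 \<Longrightarrow> poly ((pderiv ^^ k) S) a = 0"
    using poly_smooth_step_exists[of M] by blast
  have root': "poly (pderiv ((pderiv ^^ k) S)) a = 0" if "k < M" "a = 0 \<or> a = 1" for k a
    using root[of "Suc k" a] that by simp
  define u where "u k t = poly ((pderiv ^^ k) S) (max 0 (min 1 t))" for k t
  have "deriv_chain M u"
    unfolding deriv_chain_def u_def
    by (intro allI impI has_field_derivative_comp_clamp) (auto intro: root')
  moreover have "\<exists>B. \<forall>k\<le>M. \<forall>t. \<bar>u k t\<bar> \<le> B"
  proof -
    have "compact (\<Union>k\<le>M. poly ((pderiv ^^ k) S) ` {0..1})"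
      by (intro compact_UN compact_continuous_image) (auto intro: continuous_intros)
    then obtain B where B: "\<forall>y \<in> (\<Union>k\<le>M. poly ((pderiv ^^ k) S) ` {0..1}). norm y \<le> B"
      by (meson bounded_iff compact_imp_bounded)
    have "\<bar>u k t\<bar> \<le> B" if "k \<le> M" for k t
    proof -
      have "u k t \<in> (\<Union>k\<le>M. poly ((pderiv ^^ k) S) ` {0..1})"
        unfolding u_def using that by (intro UN_I[of k] image_eqI[OF refl]) auto
      then show ?thesis
        using B by auto
    qed
    then show ?thesis
      by blast
  qed
  moreover have "u k t = 0" if "1 \<le> k" "k \<le> M" "t \<le> 0 \<or> 1 \<le> t" for k t
  proof -
    have "max 0 (min 1 t) = 0 \<or> max 0 (min 1 t) = 1"
      using that(3) by auto
    then show ?thesis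
      unfolding u_def by (rule root[OF that(1,2)])
  qed
  moreover have "u 0 t = 0" if "t \<le> 0" for t
    using that S01 by (simp add: u_def)
  moreover have "u 0 t = 1" if "1 \<le> t" for t
    using that S01 by (simp add: u_def)
  ultimately show ?thesis
    by blast
qed

lemma plateau_deriv_chain_exists:
  "\<exists>b. deriv_chain N b \<and> (\<exists>B. \<forall>k\<le>N. \<forall>t. \<bar>b k t\<bar> \<le> B) \<and>
     (\<forall>k\<le>N. \<forall>t. 2 \<le> \<bar>t\<bar> \<longrightarrow> b k t = 0) \<and> (\<forall>t. \<bar>t\<bar> \<le> 1 \<longrightarrow> b 0 t = 1)"
proof -
  obtain u B where u: "deriv_chain N u" and B: "\<forall>k\<le>N. \<forall>t. \<bar>u k t\<bar> \<le> B"
    and u0: "\<forall>t\<le>0. u 0 t = 0" and u1: "\<forall>t\<ge>1. u 0 t = 1"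
    and uk: "\<forall>k t. 1 \<le> k \<longrightarrow> k \<le> N \<longrightarrow> t \<le> 0 \<or> 1 \<le> t \<longrightarrow> u k t = 0"
    using smooth_step_exists[of N] by blast
  define b where "b k t = u k (t + 2) + (-1) ^ k * u k (2 - t) - (if k = 0 then 1 else 0)" for k t
  have "deriv_chain N b"
    unfolding deriv_chain_def
  proof (intro allI impI)
    fix k t assume "k < N"
    then have u': "(u k has_real_derivative u (Suc k) t) (at t)" for t
      using u by (simp add: deriv_chain_def)
    have "((\<lambda>t. u k (t + 2)) has_real_derivative u (Suc k) (t + 2) * 1) (at t)"
      by (rule DERIV_chain2[OF u']) (auto intro!: derivative_eq_intros)
    moreover have "((\<lambda>t. u k (2 - t)) has_real_derivative u (Suc k) (2 - t) * (-1)) (at t)"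
      by (rule DERIV_chain2[OF u']) (auto intro!: derivative_eq_intros)
    ultimately have "(b k has_real_derivative
        u (Suc k) (t + 2) * 1 + (-1) ^ k * (u (Suc k) (2 - t) * (-1)) - 0) (at t)"
      unfolding b_def by (intro DERIV_diff DERIV_add DERIV_cmult DERIV_const)
    then show "(b k has_real_derivative b (Suc k) t) (at t)"
      by (simp add: b_def)
  qed
  moreover have "\<bar>b k t\<bar> \<le> 2 * B + 1" if "k \<le> N" for k t
  proof -
    have "\<bar>u k (t + 2)\<bar> \<le> B" "\<bar>u k (2 - t)\<bar> \<le> B" "\<bar>(-1) ^ k * u k (2 - t)\<bar> = \<bar>u k (2 - t)\<bar>"
      using B that by (auto simp: abs_mult power_abs)
    then show ?thesis
      unfolding b_def by (smt (verit))
  qed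
  moreover have "b k t = 0" if "k \<le> N" "2 \<le> \<bar>t\<bar>" for k t
  proof -
    have "(t + 2 \<le> 0 \<and> 1 \<le> 2 - t) \<or> (1 \<le> t + 2 \<and> 2 - t \<le> 0)"
      using that(2) by linarith
    then show ?thesis
      using u0 u1 uk that(1) by (cases "k = 0") (auto simp: b_def)
  qed
  moreover have "b 0 t = 1" if "\<bar>t\<bar> \<le> 1" for t
    using that u1 by (simp add: b_def)
  ultimately show ?thesis
    by blast
qed

lemma deriv_chain_times_id:
  assumes "deriv_chain N b"
  shows "deriv_chain N (\<lambda>k t. t * b k t + real k * b (k - 1) t)"
  unfolding deriv_chain_def
proof (intro allI impI)
  fix k t assume k: "k < N"
  have b: "\<And>j t. j < N \<Longrightarrow> (b j has_real_derivative b (Suc j) t) (at t)"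
    using assms by (simp add: deriv_chain_def)
  have "((\<lambda>t. real k * b (k - 1) t) has_real_derivative real k * b k t) (at t)"
  proof (cases k)
    case (Suc j)
    then show ?thesis
      using DERIV_cmult[OF b[of j t], of "real k"] k by simp
  qed simp
  then have "((\<lambda>t. t * b k t + real k * b (k - 1) t) has_real_derivative
      (1 * b k t + b (Suc k) t * t) + real k * b k t) (at t)"
    by (rule DERIV_add[OF DERIV_mult[OF DERIV_ident b[OF k]]])
  then show "((\<lambda>t. t * b k t + real k * b (k - 1) t) has_real_derivative
      t * b (Suc k) t + real (Suc k) * b (Suc k - 1) t) (at t)"
    by (simp add: algebra_simps)
qed

text \<open>\<open>G x [h\<^sub>1, \<dots>, h\<^sub>k]\<close> stands for the \<open>k\<close>-th derivative of \<open>f\<close> at \<open>x\<close> applied to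
  \<open>h\<^sub>1, \<dots>, h\<^sub>k\<close>; the bound \<open>B\<close> is uniform in \<open>x\<close>.\<close>

definition has_bounded_derivatives :: "nat \<Rightarrow> ('a::real_normed_vector \<Rightarrow> 'b::real_normed_vector) \<Rightarrow> bool" where
  "has_bounded_derivatives N f \<longleftrightarrow> (\<exists>G B. (\<forall>x. G x [] = f x) \<and>
     (\<forall>hs x. length hs < N \<longrightarrow> ((\<lambda>y. G y hs) has_derivative (\<lambda>v. G x (hs @ [v]))) (at x)) \<and>
     (\<forall>hs x. length hs \<le> N \<longrightarrow> norm (G x hs) \<le> B * prod_list (map norm hs)))"

lemma has_bounded_derivativesI:
  assumes "\<And>x. G x [] = f x"
    and "\<And>hs x. length hs < N \<Longrightarrow> ((\<lambda>y. G y hs) has_derivative (\<lambda>v. G x (hs @ [v]))) (at x)"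
    and "\<And>hs x. length hs \<le> N \<Longrightarrow> norm (G x hs) \<le> B * prod_list (map norm hs)"
  shows "has_bounded_derivatives N f"
  unfolding has_bounded_derivatives_def using assms by blast

lemma has_bounded_derivativesE:
  assumes "has_bounded_derivatives N f"
  obtains G B where "\<And>x. G x [] = f x"
    and "\<And>hs x. length hs < N \<Longrightarrow> ((\<lambda>y. G y hs) has_derivative (\<lambda>v. G x (hs @ [v]))) (at x)"
    and "\<And>hs x. length hs \<le> N \<Longrightarrow> norm (G x hs) \<le> B * prod_list (map norm hs)"
    and "0 \<le> B"
proof -
  obtain G B where G: "\<forall>x. G x [] = f x"
    "\<forall>hs x. length hs < N \<longrightarrow> ((\<lambda>y. G y hs) has_derivative (\<lambda>v. G x (hs @ [v]))) (at x)"
    "\<forall>hs x. length hs \<le> N \<longrightarrow> norm (G x hs) \<le> B * prod_list (map norm hs)"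
    using assms unfolding has_bounded_derivatives_def by blast
  moreover have "0 \<le> B"
  proof -
    have "norm (G x []) \<le> B" for x
      using G(3)[rule_format, of "[]" x] by simp
    then show ?thesis
      by (meson norm_ge_zero order_trans)
  qed
  ultimately show ?thesis
    using that by blast
qed

lemma prod_list_norm_nonneg: "0 \<le> prod_list (map norm (hs :: 'a::real_normed_vector list))"
  by (rule prod_list_nonneg) auto

lemma prod_list_norm_le_1: "(\<And>h. h \<in> set hs \<Longrightarrow> norm h \<le> 1) \<Longrightarrow> prod_list (map norm hs) \<le> 1"
  by (induction hs) (auto intro: mult_le_one prod_list_norm_nonneg)

lemma has_bounded_derivatives_deriv_chain:
  assumes "deriv_chain N s" and "\<And>k t. k \<le> N \<Longrightarrow> \<bar>s k t\<bar> \<le> B"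
  shows "has_bounded_derivatives N (s 0)"
proof (rule has_bounded_derivativesI[where G="\<lambda>t hs. s (length hs) t * prod_list hs"])
  fix hs :: "real list" and t :: real
  assume "length hs < N"
  then have "(s (length hs) has_real_derivative s (Suc (length hs)) t) (at t)"
    using assms(1) by (simp add: deriv_chain_def)
  then show "((\<lambda>y. s (length hs) y * prod_list hs) has_derivative
      (\<lambda>v. s (length (hs @ [v])) t * prod_list (hs @ [v]))) (at t)"
    by (auto simp: has_field_derivative_def mult_ac intro!: derivative_eq_intros)
next
  fix hs :: "real list" and t :: real
  assume "length hs \<le> N"
  moreover have "\<bar>prod_list hs\<bar> = prod_list (map norm hs)"
    by (induction hs) (simp_all add: abs_mult)
  ultimately show "norm (s (length hs) t * prod_list hs) \<le> B * prod_list (map norm hs)"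
    using assms(2) by (simp add: abs_mult mult_right_mono prod_list_norm_nonneg)
qed simp

lemma plateau_exists:
  "\<exists>\<beta>::real \<Rightarrow> real. has_bounded_derivatives N \<beta> \<and> has_bounded_derivatives N (\<lambda>t. t * \<beta> t) \<and>
     (\<forall>t. 2 \<le> \<bar>t\<bar> \<longrightarrow> \<beta> t = 0) \<and> (\<forall>t. \<bar>t\<bar> \<le> 1 \<longrightarrow> \<beta> t = 1)"
proof -
  obtain b B where b: "deriv_chain N b" and B: "\<forall>k\<le>N. \<forall>t. \<bar>b k t\<bar> \<le> B"
    and supp: "\<forall>k\<le>N. \<forall>t. 2 \<le> \<bar>t\<bar> \<longrightarrow> b k t = 0" and one: "\<forall>t. \<bar>t\<bar> \<le> 1 \<longrightarrow> b 0 t = 1"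
    using plateau_deriv_chain_exists[of N] by blast
  have B0: "0 \<le> B"
    using order_trans[OF abs_ge_zero B[rule_format, of 0 0]] by simp
  have "\<bar>t * b k t + real k * b (k - 1) t\<bar> \<le> 2 * B + real N * B" if "k \<le> N" for k t
  proof -
    have "\<bar>t\<bar> * \<bar>b k t\<bar> \<le> 2 * B"
    proof (cases "2 \<le> \<bar>t\<bar>")
      case True
      then show ?thesis
        using supp that B0 by simp
    next
      case False
      then show ?thesis
        using B that by (intro mult_mono) auto
    qed
    moreover have "real k * \<bar>b (k - 1) t\<bar> \<le> real N * B"
      using B that B0 by (intro mult_mono) auto
    ultimately show ?thesis
      using abs_triangle_ineq[of "t * b k t" "real k * b (k - 1) t"] by (simp add: abs_mult)
  qed
  then have "has_bounded_derivatives N (\<lambda>t. t * b 0 t + real 0 * b (0 - 1) t)"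
    by (rule has_bounded_derivatives_deriv_chain[OF deriv_chain_times_id[OF b]])
  then have "has_bounded_derivatives N (\<lambda>t. t * b 0 t)"
    by simp
  moreover have "has_bounded_derivatives N (b 0)"
    using has_bounded_derivatives_deriv_chain[OF b] B by blast
  ultimately show ?thesis
    using supp one by blast
qed

lemma has_bounded_derivatives_const: "has_bounded_derivatives N (\<lambda>x. c)"
proof (rule has_bounded_derivativesI[where G="\<lambda>x hs. if hs = [] then c else 0" and B="norm c"])
  show "((\<lambda>y. if hs = [] then c else 0) has_derivative (\<lambda>v. if hs @ [v] = [] then c else 0)) (at x)"
    for hs :: "'a list" and x
    by (cases "hs = []") simp_all
qed (simp_all add: prod_list_norm_nonneg)

lemma has_bounded_derivatives_add:
  assumes "has_bounded_derivatives N f" and "has_bounded_derivatives N g"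
  shows "has_bounded_derivatives N (\<lambda>x. f x + g x)"
proof -
  obtain G1 B1 where G1: "\<And>x. G1 x [] = f x"
    "\<And>hs x. length hs < N \<Longrightarrow> ((\<lambda>y. G1 y hs) has_derivative (\<lambda>v. G1 x (hs @ [v]))) (at x)"
    "\<And>hs x. length hs \<le> N \<Longrightarrow> norm (G1 x hs) \<le> B1 * prod_list (map norm hs)"
    using assms(1) by (rule has_bounded_derivativesE) blast
  obtain G2 B2 where G2: "\<And>x. G2 x [] = g x"
    "\<And>hs x. length hs < N \<Longrightarrow> ((\<lambda>y. G2 y hs) has_derivative (\<lambda>v. G2 x (hs @ [v]))) (at x)"
    "\<And>hs x. length hs \<le> N \<Longrightarrow> norm (G2 x hs) \<le> B2 * prod_list (map norm hs)"
    using assms(2) by (rule has_bounded_derivativesE) blast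
  show ?thesis
  proof (rule has_bounded_derivativesI[where G="\<lambda>x hs. G1 x hs + G2 x hs" and B="B1 + B2"])
    show "norm (G1 x hs + G2 x hs) \<le> (B1 + B2) * prod_list (map norm hs)" if "length hs \<le> N" for hs x
      using norm_triangle_ineq[of "G1 x hs" "G2 x hs"] G1(3)[OF that, of x] G2(3)[OF that, of x]
      by (simp add: distrib_right)
  qed (simp_all add: G1 G2 has_derivative_add)
qed

lemma has_bounded_derivatives_sum:
  assumes "finite I" and "\<And>i. i \<in> I \<Longrightarrow> has_bounded_derivatives N (f i)"
  shows "has_bounded_derivatives N (\<lambda>x. \<Sum>i\<in>I. f i x)"
  using assms
  by (induction I rule: finite_induct)
    (simp_all add: has_bounded_derivatives_const has_bounded_derivatives_add)

lemma has_bounded_derivatives_bounded_linear: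
  assumes "bounded_linear T" and "has_bounded_derivatives N f"
  shows "has_bounded_derivatives N (\<lambda>x. T (f x))"
proof -
  obtain G B where G: "\<And>x. G x [] = f x"
    "\<And>hs x. length hs < N \<Longrightarrow> ((\<lambda>y. G y hs) has_derivative (\<lambda>v. G x (hs @ [v]))) (at x)"
    "\<And>hs x. length hs \<le> N \<Longrightarrow> norm (G x hs) \<le> B * prod_list (map norm hs)"
    using assms(2) by (rule has_bounded_derivativesE) blast
  obtain K where K: "\<And>y. norm (T y) \<le> norm y * K" "0 < K"
    using bounded_linear.pos_bounded[OF assms(1)] by blast
  show ?thesis
  proof (rule has_bounded_derivativesI[where G="\<lambda>x hs. T (G x hs)" and B="B * K"])
    show "((\<lambda>y. T (G y hs)) has_derivative (\<lambda>v. T (G x (hs @ [v])))) (at x)" if "length hs < N" for hs x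
      using bounded_linear.has_derivative[OF assms(1) G(2)[OF that]] .
    show "norm (T (G x hs)) \<le> B * K * prod_list (map norm hs)" if "length hs \<le> N" for hs x
      using K(1)[of "G x hs"] mult_right_mono[OF G(3)[OF that, of x] less_imp_le[OF K(2)]]
      by (simp add: mult_ac)
  qed (simp add: G)
qed

lemma prod_list_norm_mono:
  assumes "\<And>v. norm (T v) \<le> norm v"
  shows "prod_list (map (\<lambda>v. norm (T v)) hs) \<le> prod_list (map norm hs)"
  by (induction hs) (auto intro!: mult_mono assms prod_list_nonneg)

lemma has_bounded_derivatives_compose_linear:
  assumes "bounded_linear T" and "\<And>v. norm (T v) \<le> norm v" and "has_bounded_derivatives N f"
  shows "has_bounded_derivatives N (\<lambda>x. f (T x))"
proof -
  obtain G B where G: "\<And>x. G x [] = f x"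
    "\<And>hs x. length hs < N \<Longrightarrow> ((\<lambda>y. G y hs) has_derivative (\<lambda>v. G x (hs @ [v]))) (at x)"
    "\<And>hs x. length hs \<le> N \<Longrightarrow> norm (G x hs) \<le> B * prod_list (map norm hs)"
    and "0 \<le> B"
    using assms(3) by (rule has_bounded_derivativesE) blast
  show ?thesis
  proof (rule has_bounded_derivativesI[where G="\<lambda>x hs. G (T x) (map T hs)" and B=B])
    show "((\<lambda>y. G (T y) (map T hs)) has_derivative (\<lambda>v. G (T x) (map T (hs @ [v])))) (at x)"
      if "length hs < N" for hs x
      using has_derivative_compose[OF bounded_linear_imp_has_derivative[OF assms(1)] G(2)[of "map T hs"]]
        that by (simp add: o_def)
    show "norm (G (T x) (map T hs)) \<le> B * prod_list (map norm hs)" if "length hs \<le> N" for hs x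
      using G(3)[of "map T hs" "T x"] that mult_left_mono[OF prod_list_norm_mono[OF assms(2), of hs] \<open>0 \<le> B\<close>]
      by (simp add: o_def)
  qed (simp add: G)
qed

lemma has_bounded_derivatives_imp_continuous_on:
  assumes "has_bounded_derivatives (Suc N) f"
  shows "continuous_on S f"
proof -
  obtain G B where G: "\<And>x. G x [] = f x"
    "\<And>hs x. length hs < Suc N \<Longrightarrow> ((\<lambda>y. G y hs) has_derivative (\<lambda>v. G x (hs @ [v]))) (at x)"
    using assms by (rule has_bounded_derivativesE) blast
  have "isCont f x" for x
    using has_derivative_continuous[OF G(2)[of "[]" x]] G(1) by simp
  then show ?thesis
    by (simp add: continuous_at_imp_continuous_on)
qed

lemma nths_restrict_length: "nths xs A = nths xs (A \<inter> {..<length xs})"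
  unfolding nths_def by (auto simp: set_zip intro!: arg_cong[where f="map fst"] filter_cong)

lemma length_nths_le: "length (nths xs A) \<le> length xs"
  by (induction xs arbitrary: A) (simp_all add: nths_Cons le_SucI)

lemma prod_list_nths_Compl:
  fixes f :: "'a \<Rightarrow> 'b::comm_monoid_mult"
  shows "prod_list (map f (nths xs A)) * prod_list (map f (nths xs (- A))) = prod_list (map f xs)"
proof (induction xs arbitrary: A)
  case (Cons x xs)
  have IH: "prod_list (map f (nths xs {j. Suc j \<in> A})) * prod_list (map f (nths xs {j. Suc j \<notin> A}))
      = prod_list (map f xs)"
    using Cons.IH[of "{j. Suc j \<in> A}"] by (simp add: Compl_eq)
  show ?case
    by (simp add: nths_Cons IH[symmetric] mult_ac)
qed simp

lemma sum_Pow_nths_snoc: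
  fixes F :: "'a list \<Rightarrow> 'a list \<Rightarrow> 'b::comm_monoid_add"
  shows "(\<Sum>S\<in>Pow {..<Suc (length xs)}. F (nths (xs @ [v]) S) (nths (xs @ [v]) (- S)))
    = (\<Sum>S\<in>Pow {..<length xs}. F (nths xs S) (nths xs (- S) @ [v]) + F (nths xs S @ [v]) (nths xs (- S)))"
proof -
  let ?n = "length xs" and ?F = "\<lambda>S. F (nths (xs @ [v]) S) (nths (xs @ [v]) (- S))"
  have old: "?F S = F (nths xs S) (nths xs (- S) @ [v])" if "S \<subseteq> {..<?n}" for S
    using that by (auto simp: nths_append)
  have new: "?F (insert ?n S) = F (nths xs S @ [v]) (nths xs (- S))" for S
  proof -
    have "insert ?n S \<inter> {..<?n} = S \<inter> {..<?n}" "- insert ?n S \<inter> {..<?n} = - S \<inter> {..<?n}"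
      by auto
    then have "nths xs (insert ?n S) = nths xs S" "nths xs (- insert ?n S) = nths xs (- S)"
      by (metis nths_restrict_length)+
    then show ?thesis
      by (simp add: nths_append)
  qed
  have inj: "inj_on (insert ?n) (Pow {..<?n})"
    by (rule inj_onI) (metis Pow_iff insert_ident lessThan_iff less_irrefl subsetD)
  have split: "(\<Sum>S\<in>Pow {..<Suc ?n}. ?F S)
      = (\<Sum>S\<in>Pow {..<?n}. ?F S) + (\<Sum>S\<in>insert ?n ` Pow {..<?n}. ?F S)"
    unfolding lessThan_Suc Pow_insert by (rule sum.union_disjoint) auto
  have "(\<Sum>S\<in>Pow {..<?n}. ?F S) = (\<Sum>S\<in>Pow {..<?n}. F (nths xs S) (nths xs (- S) @ [v]))"
    by (rule sum.cong) (simp_all add: old)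
  moreover have "(\<Sum>S\<in>insert ?n ` Pow {..<?n}. ?F S)
      = (\<Sum>S\<in>Pow {..<?n}. F (nths xs S @ [v]) (nths xs (- S)))"
    by (simp only: sum.reindex[OF inj, unfolded o_def] new)
  ultimately show ?thesis
    unfolding split by (simp add: sum.distrib)
qed

definition leibniz_prod ::
    "('a \<Rightarrow> 'a list \<Rightarrow> 'b) \<Rightarrow> ('a \<Rightarrow> 'a list \<Rightarrow> 'b) \<Rightarrow> 'a \<Rightarrow> 'a list \<Rightarrow> 'b::real_normed_algebra" where
  "leibniz_prod G1 G2 x hs = (\<Sum>S\<in>Pow {..<length hs}. G1 x (nths hs S) * G2 x (nths hs (- S)))"

lemma has_derivative_leibniz_prod:
  assumes "\<And>as x. length as \<le> length hs \<Longrightarrow> ((\<lambda>y. G1 y as) has_derivative (\<lambda>v. G1 x (as @ [v]))) (at x)"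
    and "\<And>as x. length as \<le> length hs \<Longrightarrow> ((\<lambda>y. G2 y as) has_derivative (\<lambda>v. G2 x (as @ [v]))) (at x)"
  shows "((\<lambda>y. leibniz_prod G1 G2 y hs) has_derivative (\<lambda>v. leibniz_prod G1 G2 x (hs @ [v]))) (at x)"
proof -
  have "((\<lambda>y. leibniz_prod G1 G2 y hs) has_derivative (\<lambda>v. \<Sum>S\<in>Pow {..<length hs}.
      G1 x (nths hs S) * G2 x (nths hs (- S) @ [v]) + G1 x (nths hs S @ [v]) * G2 x (nths hs (- S)))) (at x)"
    unfolding leibniz_prod_def
    by (intro has_derivative_sum has_derivative_mult assms length_nths_le)
  then show ?thesis
    using sum_Pow_nths_snoc[where F="\<lambda>a b. G1 x a * G2 x b" and xs=hs] by (simp add: leibniz_prod_def)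
qed

lemma norm_leibniz_prod_le:
  fixes G1 G2 :: "'a::real_normed_vector \<Rightarrow> 'a list \<Rightarrow> 'b::real_normed_algebra"
  assumes "\<And>as. length as \<le> length hs \<Longrightarrow> norm (G1 x as) \<le> B1 * prod_list (map norm as)"
    and "\<And>as. length as \<le> length hs \<Longrightarrow> norm (G2 x as) \<le> B2 * prod_list (map norm as)"
    and "0 \<le> B1"
  shows "norm (leibniz_prod G1 G2 x hs) \<le> 2 ^ length hs * B1 * B2 * prod_list (map norm hs)"
proof -
  have "norm (G1 x (nths hs S) * G2 x (nths hs (- S))) \<le> B1 * B2 * prod_list (map norm hs)" for S
  proof -
    have "norm (G1 x (nths hs S)) * norm (G2 x (nths hs (- S)))
        \<le> (B1 * prod_list (map norm (nths hs S))) * (B2 * prod_list (map norm (nths hs (- S))))"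
      by (rule mult_mono[OF assms(1)[OF length_nths_le] assms(2)[OF length_nths_le]])
        (simp_all add: \<open>0 \<le> B1\<close> prod_list_norm_nonneg)
    then have "norm (G1 x (nths hs S) * G2 x (nths hs (- S)))
        \<le> (B1 * prod_list (map norm (nths hs S))) * (B2 * prod_list (map norm (nths hs (- S))))"
      by (rule order_trans[OF norm_mult_ineq])
    also have "\<dots> = B1 * B2 * prod_list (map norm hs)"
      using prod_list_nths_Compl[of norm hs S] by (simp add: mult_ac)
    finally show ?thesis .
  qed
  then have "norm (leibniz_prod G1 G2 x hs) \<le> (\<Sum>S\<in>Pow {..<length hs}. B1 * B2 * prod_list (map norm hs))"
    unfolding leibniz_prod_def by (intro order_trans[OF norm_sum] sum_mono)
  then show ?thesis
    by (simp add: card_Pow mult_ac)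
qed

lemma has_bounded_derivatives_mult:
  fixes f g :: "'a::real_normed_vector \<Rightarrow> 'b::real_normed_algebra"
  assumes "has_bounded_derivatives N f" and "has_bounded_derivatives N g"
  shows "has_bounded_derivatives N (\<lambda>x. f x * g x)"
proof -
  obtain G1 B1 where G1: "\<And>x. G1 x [] = f x"
    "\<And>hs x. length hs < N \<Longrightarrow> ((\<lambda>y. G1 y hs) has_derivative (\<lambda>v. G1 x (hs @ [v]))) (at x)"
    "\<And>hs x. length hs \<le> N \<Longrightarrow> norm (G1 x hs) \<le> B1 * prod_list (map norm hs)"
    and "0 \<le> B1"
    using assms(1) by (rule has_bounded_derivativesE) blast
  obtain G2 B2 where G2: "\<And>x. G2 x [] = g x"
    "\<And>hs x. length hs < N \<Longrightarrow> ((\<lambda>y. G2 y hs) has_derivative (\<lambda>v. G2 x (hs @ [v]))) (at x)"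
    "\<And>hs x. length hs \<le> N \<Longrightarrow> norm (G2 x hs) \<le> B2 * prod_list (map norm hs)"
    and "0 \<le> B2"
    using assms(2) by (rule has_bounded_derivativesE) blast
  show ?thesis
  proof (rule has_bounded_derivativesI[where G="leibniz_prod G1 G2" and B="2 ^ N * B1 * B2"])
    show "((\<lambda>y. leibniz_prod G1 G2 y hs) has_derivative (\<lambda>v. leibniz_prod G1 G2 x (hs @ [v]))) (at x)"
      if "length hs < N" for hs x
      using that by (intro has_derivative_leibniz_prod G1(2) G2(2)) simp_all
    show "norm (leibniz_prod G1 G2 x hs) \<le> 2 ^ N * B1 * B2 * prod_list (map norm hs)"
      if "length hs \<le> N" for hs x
    proof -
      have "norm (leibniz_prod G1 G2 x hs) \<le> 2 ^ length hs * (B1 * B2 * prod_list (map norm hs))"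
        using that norm_leibniz_prod_le[of hs G1 x B1 G2 B2] G1(3) G2(3) \<open>0 \<le> B1\<close> by (simp add: mult_ac)
      also have "\<dots> \<le> 2 ^ N * (B1 * B2 * prod_list (map norm hs))"
        using that \<open>0 \<le> B1\<close> \<open>0 \<le> B2\<close>
        by (intro mult_right_mono power_increasing) (simp_all add: prod_list_norm_nonneg)
      finally show ?thesis
        by (simp add: mult_ac)
    qed
  qed (simp add: leibniz_prod_def G1(1) G2(1))
qed

lemma has_bounded_derivatives_prod:
  fixes f :: "'i \<Rightarrow> 'a::real_normed_vector \<Rightarrow> 'b::{real_normed_algebra_1,comm_monoid_mult}"
  assumes "finite I" and "\<And>i. i \<in> I \<Longrightarrow> has_bounded_derivatives N (f i)"
  shows "has_bounded_derivatives N (\<lambda>x. \<Prod>i\<in>I. f i x)"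
  using assms
  by (induction I rule: finite_induct)
    (simp_all add: has_bounded_derivatives_const has_bounded_derivatives_mult)

lemma inner_sgn_self: "x \<bullet> sgn x = norm (x :: 'a::real_inner)"
  by (cases "x = 0") (simp_all add: sgn_div_norm inner_scaleR_right dot_square_norm power2_eq_square)

lemma norm_taylor_remainder_le:
  fixes G :: "'a::real_normed_vector \<Rightarrow> 'a list \<Rightarrow> 'b::real_inner"
  assumes deriv: "\<And>hs x. length hs \<le> m \<Longrightarrow> ((\<lambda>y. G y hs) has_derivative (\<lambda>v. G x (hs @ [v]))) (at x)"
    and bound: "\<And>hs x. length hs = Suc m \<Longrightarrow> norm (G x hs) \<le> B * prod_list (map norm hs)"
    and len: "length hs \<le> m"
  shows "norm (G y hs - (\<Sum>j\<le>m - length hs. (1 / fact j) *\<^sub>R G x (hs @ replicate j (y - x))))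
           \<le> B * prod_list (map norm hs) * norm (y - x) ^ Suc (m - length hs)"
    (is "norm ?R \<le> _")
proof -
  define d where "d = y - x"
  define M where "M = Suc (m - length hs)"
  \<comment> \<open>Pairing with the direction of the remainder reduces the estimate to one-variable Taylor.\<close>
  define D where "D j t = G (x + t *\<^sub>R d) (hs @ replicate j d) \<bullet> sgn ?R" for j t
  have D': "(D j has_real_derivative D (Suc j) t) (at t)" if "j < M" for j t
  proof -
    let ?z = "x + t *\<^sub>R d" and ?hs = "hs @ replicate j d"
    have G': "((\<lambda>y. G y ?hs) has_derivative (\<lambda>v. G ?z (?hs @ [v]))) (at ?z)"
      using deriv[of ?hs ?z] that len by (simp add: M_def)
    have "((\<lambda>t. x + t *\<^sub>R d) has_derivative (\<lambda>s. s *\<^sub>R d)) (at t)"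
      by (auto intro!: derivative_eq_intros)
    from has_derivative_compose[OF this G']
    have "((\<lambda>t. G (x + t *\<^sub>R d) ?hs) has_derivative (\<lambda>s. G ?z (?hs @ [s *\<^sub>R d]))) (at t)"
      by simp
    moreover have "G ?z (?hs @ [s *\<^sub>R d]) = s *\<^sub>R G ?z (hs @ replicate (Suc j) d)" for s
      using linear_scale[OF has_derivative_linear[OF G'], of s d] by (simp add: replicate_append_same)
    ultimately have "((\<lambda>t. G (x + t *\<^sub>R d) ?hs) has_derivative
        (\<lambda>s. s *\<^sub>R G ?z (hs @ replicate (Suc j) d))) (at t)"
      by simp
    then have "((\<lambda>t. G (x + t *\<^sub>R d) ?hs \<bullet> sgn ?R) has_derivative
        (\<lambda>s. (s *\<^sub>R G ?z (hs @ replicate (Suc j) d)) \<bullet> sgn ?R)) (at t)"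
      by (rule bounded_linear.has_derivative[OF bounded_linear_inner_left])
    then show ?thesis
      by (simp add: D_def[abs_def] has_field_derivative_def mult_commute_abs)
  qed
  have "\<exists>t. 0 < t \<and> t < 1 \<and> D 0 1 = (\<Sum>j<M. D j 0 / fact j * 1 ^ j) + D M t / fact M * 1 ^ M"
    by (rule Maclaurin[OF zero_less_one _ refl]) (simp_all add: M_def D')
  then obtain t where T: "D 0 1 - (\<Sum>j<M. D j 0 / fact j) = D M t / fact M"
    by auto
  have "D 0 1 - (\<Sum>j<M. D j 0 / fact j) = ?R \<bullet> sgn ?R"
    by (simp add: D_def d_def M_def lessThan_Suc_atMost inner_diff_left inner_sum_left)
  then have "norm ?R = D M t / fact M"
    using T by (simp add: inner_sgn_self)
  also have "\<dots> \<le> \<bar>D M t\<bar> / fact M"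
    by (simp add: divide_right_mono)
  also have "\<dots> \<le> \<bar>D M t\<bar> / 1"
    by (intro divide_left_mono) simp_all
  also have "\<dots> \<le> norm (G (x + t *\<^sub>R d) (hs @ replicate M d)) * norm (sgn ?R)"
    using Cauchy_Schwarz_ineq2 by (simp add: D_def)
  also have "\<dots> \<le> norm (G (x + t *\<^sub>R d) (hs @ replicate M d))"
    by (simp add: mult_left_le norm_sgn)
  also have "\<dots> \<le> B * prod_list (map norm hs) * norm d ^ M"
    using bound[of "hs @ replicate M d"] len by (simp add: M_def prod_list_replicate mult_ac)
  finally show ?thesis
    by (simp add: d_def M_def)
qed

lemma lip_order_bounds:
  assumes "1 \<le> \<gamma>"
  shows "real (lip_order \<gamma>) < \<gamma>" and "\<gamma> \<le> real (lip_order \<gamma>) + 1"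
proof -
  have "real (lip_order \<gamma>) = real_of_int \<lceil>\<gamma>\<rceil> - 1"
    using assms by (simp add: lip_order_def)
  then show "real (lip_order \<gamma>) < \<gamma>" and "\<gamma> \<le> real (lip_order \<gamma>) + 1"
    by linarith+
qed

lemma power_le_powr_of_le_2:
  fixes r :: real
  assumes "0 \<le> r" and "r \<le> 2" and "k \<le> m" and "real m < \<gamma>" and "\<gamma> \<le> real m + 1"
  shows "r ^ Suc (m - k) \<le> 2 * r powr (\<gamma> - real k)"
proof (cases "r = 0")
  case False
  define e where "e = real (Suc (m - k)) - (\<gamma> - real k)"
  have e: "0 \<le> e" "e \<le> 1"
    using assms(3-5) by (auto simp: e_def of_nat_diff)
  have "0 < r"
    using False assms(1) by simp
  then have "r ^ Suc (m - k) = r powr real (Suc (m - k))"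
    by (rule powr_realpow[symmetric])
  also have "\<dots> = r powr (\<gamma> - real k) * r powr e"
    by (simp add: e_def flip: powr_add)
  also have "\<dots> \<le> r powr (\<gamma> - real k) * 2"
  proof (rule mult_left_mono)
    have "r powr e \<le> 2 powr e"
      using e assms(1,2) by (intro powr_mono2) simp_all
    also have "\<dots> \<le> 2 powr 1"
      using e by (intro powr_mono) simp_all
    finally show "r powr e \<le> 2"
      by simp
  qed simp
  finally show ?thesis
    by simp
qed simp

lemma lip_gamma_on_cong:
  assumes "lip_gamma_on \<gamma> L U f" and "\<And>x. x \<in> U \<Longrightarrow> f x = g x"
  shows "lip_gamma_on \<gamma> L U g"
  using assms unfolding lip_gamma_on_def by (elim exE) (rule exI, auto)

lemma lip_gamma_on_ball_of_derivative_bounds: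
  fixes G :: "'a::euclidean_space \<Rightarrow> 'a list \<Rightarrow> 'b::real_inner"
  assumes "1 \<le> \<gamma>"
    and deriv: "\<And>hs x. length hs \<le> lip_order \<gamma> \<Longrightarrow> ((\<lambda>y. G y hs) has_derivative (\<lambda>v. G x (hs @ [v]))) (at x)"
    and bound: "\<And>hs x. length hs \<le> Suc (lip_order \<gamma>) \<Longrightarrow> norm (G x hs) \<le> B * prod_list (map norm hs)"
    and "0 \<le> B"
  shows "lip_gamma_on \<gamma> (2 * B + 1) (ball 0 1) (\<lambda>x. G x [])"
  unfolding lip_gamma_on_def
proof (intro exI[of _ "\<lambda>k. G"] conjI ballI allI impI)
  fix k and hs :: "'a list" and x :: 'a
  assume "k < lip_order \<gamma>" and "length hs = k"
  then show "((\<lambda>y. G y hs) has_derivative (\<lambda>v. G x (hs @ [v]))) (at x within ball 0 1)"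
    by (intro has_derivative_at_withinI[OF deriv]) simp
next
  fix k and hs :: "'a list" and x :: 'a
  assume "k \<le> lip_order \<gamma>" and hs: "length hs = k \<and> (\<forall>h\<in>set hs. norm h \<le> 1)"
  then have "norm (G x hs) \<le> B * prod_list (map norm hs)"
    by (intro bound) simp
  also have "\<dots> \<le> B * 1"
    using hs \<open>0 \<le> B\<close> by (intro mult_left_mono prod_list_norm_le_1) auto
  finally show "norm (G x hs) \<le> 2 * B + 1"
    using \<open>0 \<le> B\<close> by simp
next
  fix k and hs :: "'a list" and x y :: 'a
  assume k: "k \<le> lip_order \<gamma>" and x: "x \<in> ball 0 1" and y: "y \<in> ball 0 1"
    and hs: "length hs = k \<and> (\<forall>h\<in>set hs. norm h \<le> 1)"
  let ?m = "lip_order \<gamma>"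
  have "norm (y - x) \<le> 2"
    using x y norm_triangle_ineq4[of y x] by simp
  have "norm (G y hs - (\<Sum>j\<le>?m - k. (1 / fact j) *\<^sub>R G x (hs @ replicate j (y - x))))
      \<le> B * prod_list (map norm hs) * norm (y - x) ^ Suc (?m - k)"
    using norm_taylor_remainder_le[of ?m G B hs y x] deriv bound k hs by simp
  also have "\<dots> \<le> B * 1 * (2 * norm (x - y) powr (\<gamma> - real k))"
  proof (rule mult_mono)
    show "B * prod_list (map norm hs) \<le> B * 1"
      using hs \<open>0 \<le> B\<close> by (intro mult_left_mono prod_list_norm_le_1) auto
    have "norm (x - y) ^ Suc (?m - k) \<le> 2 * norm (x - y) powr (\<gamma> - real k)"
      using k \<open>norm (y - x) \<le> 2\<close> lip_order_bounds[OF assms(1)]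
      by (intro power_le_powr_of_le_2) (simp_all add: norm_minus_commute)
    then show "norm (y - x) ^ Suc (?m - k) \<le> 2 * norm (x - y) powr (\<gamma> - real k)"
      by (simp add: norm_minus_commute)
  qed (simp_all add: \<open>0 \<le> B\<close>)
  also have "\<dots> \<le> (2 * B + 1) * norm (x - y) powr (\<gamma> - real k)"
    by (simp add: mult_right_mono flip: mult.assoc)
  finally show "norm (G y hs - (\<Sum>j\<le>?m - k. (1 / fact j) *\<^sub>R G x (hs @ replicate j (y - x))))
      \<le> (2 * B + 1) * norm (x - y) powr (\<gamma> - real k)" .
qed simp

lemma lip_gamma_on_translates:
  fixes f :: "'a::euclidean_space \<Rightarrow> 'b::real_inner"
  assumes "1 \<le> \<gamma>" and "has_bounded_derivatives (Suc (lip_order \<gamma>)) f"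
  shows "\<exists>L>0. \<forall>a. lip_gamma_on \<gamma> L (ball 0 1) (\<lambda>y. f (y + a))"
proof -
  obtain G B where G: "\<And>x. G x [] = f x"
    "\<And>hs x. length hs < Suc (lip_order \<gamma>) \<Longrightarrow> ((\<lambda>y. G y hs) has_derivative (\<lambda>v. G x (hs @ [v]))) (at x)"
    "\<And>hs x. length hs \<le> Suc (lip_order \<gamma>) \<Longrightarrow> norm (G x hs) \<le> B * prod_list (map norm hs)"
    and "0 \<le> B"
    using assms(2) by (rule has_bounded_derivativesE) blast
  have "lip_gamma_on \<gamma> (2 * B + 1) (ball 0 1) (\<lambda>y. G (y + a) [])" for a
  proof (rule lip_gamma_on_ball_of_derivative_bounds[OF assms(1) _ _ \<open>0 \<le> B\<close>])
    show "((\<lambda>y. G (y + a) hs) has_derivative (\<lambda>v. G (x + a) (hs @ [v]))) (at x)"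
      if "length hs \<le> lip_order \<gamma>" for hs x
      using has_derivative_compose[OF has_derivative_add_const[OF has_derivative_ident] G(2)[of hs "x + a"]]
        that by simp
    show "norm (G (x + a) hs) \<le> B * prod_list (map norm hs)" if "length hs \<le> Suc (lip_order \<gamma>)" for hs x
      using G(3)[OF that] .
  qed
  then have "lip_gamma_on \<gamma> (2 * B + 1) (ball 0 1) (\<lambda>y. f (y + a))" for a
    by (simp add: G(1))
  moreover have "0 < 2 * B + 1"
    using \<open>0 \<le> B\<close> by simp
  ultimately show ?thesis
    by blast
qed

lemma identity_cutoff_exists:
  "\<exists>h::'a::euclidean_space \<Rightarrow> 'a. has_bounded_derivatives N h \<and> (\<forall>x\<in>ball 0 1. h x = x) \<and>
     (\<forall>x. h x \<noteq> 0 \<longrightarrow> norm x < 2 * DIM('a))"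
proof -
  obtain \<beta> :: "real \<Rightarrow> real" where \<beta>: "has_bounded_derivatives N \<beta>"
    and t\<beta>: "has_bounded_derivatives N (\<lambda>t. t * \<beta> t)"
    and supp: "\<forall>t. 2 \<le> \<bar>t\<bar> \<longrightarrow> \<beta> t = 0" and one: "\<forall>t. \<bar>t\<bar> \<le> 1 \<longrightarrow> \<beta> t = 1"
    using plateau_exists by blast
  have coord: "has_bounded_derivatives N (\<lambda>x::'a. g (x \<bullet> b))"
    if "has_bounded_derivatives N g" and "b \<in> Basis" for g b
    using that by (intro has_bounded_derivatives_compose_linear[OF bounded_linear_inner_left])
      (simp_all add: Basis_le_norm)
  \<comment> \<open>\<open>h x = (\<Prod>b\<in>Basis. \<beta> (x \<bullet> b)) *\<^sub>R x\<close>, written so that every factor has bounded derivatives\<close>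
  define h where "h x = (\<Sum>b\<in>Basis. ((x \<bullet> b) * \<beta> (x \<bullet> b) * (\<Prod>b'\<in>Basis - {b}. \<beta> (x \<bullet> b'))) *\<^sub>R b)"
    for x :: 'a
  have "has_bounded_derivatives N (\<lambda>x::'a. (x \<bullet> b) * \<beta> (x \<bullet> b) * (\<Prod>b'\<in>Basis - {b}. \<beta> (x \<bullet> b')))"
    if "b \<in> Basis" for b
  proof (rule has_bounded_derivatives_mult)
    show "has_bounded_derivatives N (\<lambda>x::'a. (x \<bullet> b) * \<beta> (x \<bullet> b))"
      using coord[OF t\<beta> that] by simp
    show "has_bounded_derivatives N (\<lambda>x::'a. \<Prod>b'\<in>Basis - {b}. \<beta> (x \<bullet> b'))"
      by (intro has_bounded_derivatives_prod coord[OF \<beta>]) auto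
  qed
  then have "has_bounded_derivatives N h"
    unfolding h_def[abs_def]
    by (intro has_bounded_derivatives_sum has_bounded_derivatives_bounded_linear[OF bounded_linear_scaleR_left])
      simp_all
  moreover have "h x = x" if "x \<in> ball 0 1" for x
  proof -
    have "\<beta> (x \<bullet> b) = 1" if "b \<in> Basis" for b
      using one Basis_le_norm[OF that, of x] \<open>x \<in> ball 0 1\<close> by simp
    then have "h x = (\<Sum>b\<in>Basis. (x \<bullet> b) *\<^sub>R b)"
      unfolding h_def by (intro sum.cong) simp_all
    then show ?thesis
      by (simp add: euclidean_representation)
  qed
  moreover have "norm x < 2 * DIM('a)" if "h x \<noteq> 0" for x
  proof -
    obtain b where b: "b \<in> Basis" and "(x \<bullet> b) * \<beta> (x \<bullet> b) * (\<Prod>b'\<in>Basis - {b}. \<beta> (x \<bullet> b')) \<noteq> 0"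
      using \<open>h x \<noteq> 0\<close> unfolding h_def by (metis (no_types, lifting) scale_zero_left sum.neutral)
    then have "\<beta> (x \<bullet> b') \<noteq> 0" if "b' \<in> Basis" for b'
      using that by (cases "b' = b") auto
    then have "\<bar>x \<bullet> b'\<bar> < 2" if "b' \<in> Basis" for b'
      using supp that by force
    then have "(\<Sum>b\<in>Basis. \<bar>x \<bullet> b\<bar>) < (\<Sum>b\<in>(Basis::'a set). 2)"
      by (intro sum_strict_mono) auto
    then show ?thesis
      using norm_le_l1[of x] by (simp add: mult.commute)
  qed
  ultimately show ?thesis
    by blast
qed

definition int_lattice :: "'a::euclidean_space set" where
  "int_lattice = {c. \<forall>b\<in>Basis. c \<bullet> b \<in> \<int>}"

lemma int_lattice_near: "\<exists>c\<in>int_lattice. norm (z - c) \<le> DIM('a) / 2"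
  for z :: "'a::euclidean_space"
proof
  define c :: 'a where "c = (\<Sum>b\<in>Basis. of_int (round (z \<bullet> b)) *\<^sub>R b)"
  have c: "c \<bullet> b = of_int (round (z \<bullet> b))" if "b \<in> Basis" for b
    using that by (simp add: c_def inner_sum_left_Basis)
  then show "c \<in> int_lattice"
    by (simp add: int_lattice_def)
  have "norm (z - c) \<le> (\<Sum>b\<in>Basis. \<bar>(z - c) \<bullet> b\<bar>)"
    by (rule norm_le_l1)
  also have "\<dots> \<le> (\<Sum>b\<in>(Basis::'a set). 1 / 2)"
    using of_int_round_abs_le by (intro sum_mono) (simp add: c inner_diff_left abs_minus_commute)
  finally show "norm (z - c) \<le> DIM('a) / 2"
    by simp
qed

lemma finite_int_lattice_Int:
  assumes "bounded S"
  shows "finite (int_lattice \<inter> S)"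
proof -
  obtain M where M: "\<And>x. x \<in> S \<Longrightarrow> norm x \<le> M"
    using assms by (auto simp: bounded_iff)
  let ?K = "{-\<lceil>M\<rceil>..\<lceil>M\<rceil>}"
  have "int_lattice \<inter> S \<subseteq> (\<lambda>k. \<Sum>b\<in>Basis. of_int (k b) *\<^sub>R b) ` (Basis \<rightarrow>\<^sub>E ?K)"
  proof
    fix c assume c: "c \<in> int_lattice \<inter> S"
    have int: "of_int \<lfloor>c \<bullet> b\<rfloor> = c \<bullet> b" if "b \<in> Basis" for b
    proof -
      have "c \<bullet> b \<in> \<int>"
        using c that by (simp add: int_lattice_def)
      then show ?thesis
        by (elim Ints_cases) simp
    qed
    have "\<lfloor>c \<bullet> b\<rfloor> \<in> ?K" if b: "b \<in> Basis" for b
    proof -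
      have "\<bar>c \<bullet> b\<bar> \<le> M"
        using Basis_le_norm[OF b, of c] c M[of c] by simp
      then have "- real_of_int \<lceil>M\<rceil> \<le> of_int \<lfloor>c \<bullet> b\<rfloor>" "real_of_int \<lfloor>c \<bullet> b\<rfloor> \<le> of_int \<lceil>M\<rceil>"
        using int[OF b] le_of_int_ceiling[of M] by linarith+
      then show ?thesis
        by simp
    qed
    then have mem: "restrict (\<lambda>b. \<lfloor>c \<bullet> b\<rfloor>) Basis \<in> Basis \<rightarrow>\<^sub>E ?K"
      by simp
    have "c = (\<Sum>b\<in>Basis. of_int (restrict (\<lambda>b. \<lfloor>c \<bullet> b\<rfloor>) Basis b) *\<^sub>R b)"
      by (simp add: int euclidean_representation cong: sum.cong)
    then show "c \<in> (\<lambda>k. \<Sum>b\<in>Basis. of_int (k b) *\<^sub>R b) ` (Basis \<rightarrow>\<^sub>E ?K)"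
      using mem by blast
  qed
  then show ?thesis
    by (rule finite_subset) (intro finite_imageI finite_PiE finite_Basis finite_atLeastAtMost_int)
qed

lemma countable_int_lattice: "countable (int_lattice :: 'a::euclidean_space set)"
proof -
  have "int_lattice = (\<Union>n::nat. int_lattice \<inter> cball (0::'a) (real n))"
    using real_arch_simple by (auto simp: dist_norm)
  moreover have "countable (int_lattice \<inter> cball (0::'a) (real n))" for n
    by (intro countable_finite finite_int_lattice_Int bounded_cball)
  ultimately show ?thesis
    by (metis countable_UN countableI_type)
qed

lemma infinite_int_lattice: "infinite (int_lattice :: 'a::euclidean_space set)"
proof
  assume fin: "finite (int_lattice :: 'a set)"
  obtain b :: 'a where b: "b \<in> Basis"
    using nonempty_Basis by blast
  have "range (\<lambda>n::nat. real n *\<^sub>R b) \<subseteq> int_lattice"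
    using b by (auto simp: int_lattice_def inner_Basis)
  moreover have "inj (\<lambda>n::nat. real n *\<^sub>R b)"
    using b by (auto simp: inj_on_def nonzero_Basis)
  ultimately show False
    using fin finite_subset finite_imageD infinite_UNIV_nat by blast
qed

lemma second_countable_euclidean: "second_countable (euclidean :: 'a::second_countable_topology topology)"
proof -
  obtain \<B> :: "'a set set" where \<B>: "countable \<B>" "\<And>C. C \<in> \<B> \<Longrightarrow> open C"
    "\<And>S. open S \<Longrightarrow> \<exists>U. U \<subseteq> \<B> \<and> S = \<Union>U"
    by (rule univ_second_countable) blast
  show ?thesis
    unfolding second_countable_def
  proof (intro exI conjI ballI allI impI)
    fix S :: "'a set" and x assume "openin euclidean S \<and> x \<in> S"
    then obtain \<U> where "\<U> \<subseteq> \<B>" "S = \<Union>\<U>" "x \<in> S"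
      using \<B>(3) by auto
    then show "\<exists>V\<in>\<B>. x \<in> V \<and> V \<subseteq> S"
      by auto
  qed (use \<B> in auto)
qed

lemma homeomorphism_imp_homeomorphic_maps:
  "homeomorphism S T f g \<Longrightarrow> homeomorphic_maps (top_of_set S) (top_of_set T) f g"
  by (force simp: Pi_iff homeomorphic_maps_def homeomorphism_def)

lemma homeomorphism_inv_into:
  assumes "homeomorphism S T f g" and "y \<in> T"
  shows "inv_into S f y = g y"
proof (rule inv_into_f_eq)
  show "inj_on f S"
    using assms(1) by (rule inj_on_inverseI[OF homeomorphism_apply1])
qed (use assms in \<open>auto simp: homeomorphism_def\<close>)

lemma homeomorphism_rescale_ball:
  fixes c :: "'a::real_normed_vector"
  assumes "0 < r"
  shows "homeomorphism (ball c r) (ball 0 1) (\<lambda>x. (x - c) /\<^sub>R r) (\<lambda>y. c + r *\<^sub>R y)"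
proof -
  have in1: "(x - c) /\<^sub>R r \<in> ball 0 1" if "x \<in> ball c r" for x
    using that assms by (simp add: dist_norm norm_minus_commute) (simp add: field_simps)
  have in2: "c + r *\<^sub>R y \<in> ball c r" if "y \<in> ball 0 1" for y
    using that assms by (simp add: dist_norm)
  have "(\<lambda>x. (x - c) /\<^sub>R r) ` ball c r = ball 0 1"
  proof
    show "ball 0 1 \<subseteq> (\<lambda>x. (x - c) /\<^sub>R r) ` ball c r"
      using in2 assms by (auto intro!: image_eqI[where x="c + r *\<^sub>R _"])
  qed (use in1 in auto)
  moreover have "(\<lambda>y. c + r *\<^sub>R y) ` ball 0 1 = ball c r"
  proof
    show "ball c r \<subseteq> (\<lambda>y. c + r *\<^sub>R y) ` ball 0 1"
      using in1 assms by (auto intro!: image_eqI[where x="(_ - c) /\<^sub>R r"])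
  qed (use in2 in auto)
  ultimately show ?thesis
    using assms by (auto simp: homeomorphism_def intro!: continuous_intros)
qed

lemma homeomorphism_rescaled_chart:
  fixes h :: "'a::real_normed_vector \<Rightarrow> 'a"
  assumes "\<forall>x\<in>ball 0 1. h x = x" and "0 < r"
  shows "homeomorphism (ball c r) (ball 0 1) (\<lambda>x. h ((x - c) /\<^sub>R r)) (\<lambda>y. c + r *\<^sub>R y)"
proof (rule homeomorphism_cong[OF homeomorphism_rescale_ball[OF assms(2)]])
  fix x assume "x \<in> ball c r"
  then have "(x - c) /\<^sub>R r \<in> ball 0 1"
    using assms(2) by (simp add: dist_norm norm_minus_commute) (simp add: field_simps)
  then show "h ((x - c) /\<^sub>R r) = (x - c) /\<^sub>R r"
    using assms(1) by blast
qed simp_all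

lemma finite_int_lattice_balls_meeting:
  assumes "inj e" and "range e \<subseteq> int_lattice"
  shows "finite {i. ball (e i) r \<inter> ball x s \<noteq> {}}"
proof -
  have "{i. ball (e i) r \<inter> ball x s \<noteq> {}} \<subseteq> e -` (int_lattice \<inter> ball x (r + s))"
  proof
    fix i assume "i \<in> {i. ball (e i) r \<inter> ball x s \<noteq> {}}"
    then obtain y where "dist (e i) y < r" "dist x y < s"
      by auto
    then have "dist x (e i) < r + s"
      using dist_triangle[of x "e i" y] by (simp add: dist_commute)
    then show "i \<in> e -` (int_lattice \<inter> ball x (r + s))"
      using assms(2) by auto
  qed
  moreover have "finite (e -` (int_lattice \<inter> ball x (r + s)))"
    by (rule finite_vimageI[OF finite_int_lattice_Int[OF bounded_ball] assms(1)])
  ultimately show ?thesis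
    by (rule finite_subset)
qed

lemma lip_gamma_manifold_lattice_charts:
  fixes h :: "'a::euclidean_space \<Rightarrow> 'a" and e :: "nat \<Rightarrow> 'a"
  assumes h_id: "\<forall>x\<in>ball 0 1. h x = x" and h_supp: "\<forall>x. h x \<noteq> 0 \<longrightarrow> norm x < 2 * DIM('a)"
    and h_cont: "continuous_on UNIV h"
    and L: "0 < L" "\<And>a. lip_gamma_on \<gamma> L (ball 0 1) (\<lambda>y. h (y + a))"
    and e: "bij_betw e UNIV int_lattice"
  shows "lip_gamma_manifold \<gamma> euclidean UNIV (\<lambda>i. ball (e i) DIM('a)) (\<lambda>i x. h ((x - e i) /\<^sub>R DIM('a)))"
proof -
  define \<rho> :: real where "\<rho> = DIM('a)"
  define \<phi> where "\<phi> i x = h ((x - e i) /\<^sub>R \<rho>)" for i x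
  have "1 \<le> \<rho>"
    by (simp add: \<rho>_def Suc_le_eq)
  have norm_div_\<rho>: "norm (v /\<^sub>R \<rho>) = norm v / \<rho>" for v :: 'a
    using \<open>1 \<le> \<rho>\<close> by (simp add: divide_inverse_commute)
  have hom: "homeomorphism (ball (e i) \<rho>) (ball 0 1) (\<phi> i) (\<lambda>y. e i + \<rho> *\<^sub>R y)" for i
    unfolding \<phi>_def using homeomorphism_rescaled_chart[OF h_id] \<open>1 \<le> \<rho>\<close> by simp
  have cover: "\<exists>i. x \<in> ball (e i) \<rho> \<and> \<phi> i x \<in> ball 0 (1 - 1/4)" for x
  proof -
    obtain c where c: "c \<in> int_lattice" "norm (x - c) \<le> \<rho> / 2"
      using int_lattice_near[of x] by (auto simp: \<rho>_def)
    moreover obtain i where "c = e i"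
      using e c(1) unfolding bij_betw_def by blast
    ultimately have "norm (x - e i) \<le> \<rho> / 2"
      by simp
    then have "norm ((x - e i) /\<^sub>R \<rho>) \<le> 1 / 2" "x \<in> ball (e i) \<rho>"
      using \<open>1 \<le> \<rho>\<close> unfolding norm_div_\<rho> by (simp_all add: divide_le_eq dist_norm norm_minus_commute)
    then show ?thesis
      using h_id by (auto simp: \<phi>_def)
  qed
  show ?thesis
    unfolding lip_gamma_manifold_def \<rho>_def[symmetric] \<phi>_def[symmetric]
  proof (intro conjI ballI)
    show "second_countable (euclidean :: 'a topology)"
      by (rule second_countable_euclidean)
    show "continuous_map euclidean euclidean (\<phi> i)" for i
    proof -
      have "continuous_on UNIV (\<phi> i)"
        unfolding \<phi>_def[abs_def]
        by (rule continuous_on_compose2[OF h_cont])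
          (auto intro!: continuous_intros)
      then show ?thesis
        by simp
    qed
    show "\<exists>K. compactin euclidean K \<and> (\<forall>x\<in>topspace euclidean - K. \<phi> i x = 0)" for i
    proof (intro exI conjI ballI)
      show "compactin euclidean (cball (e i) (2 * DIM('a) * \<rho>))"
        by simp
      fix x assume "x \<in> topspace euclidean - cball (e i) (2 * DIM('a) * \<rho>)"
      then have "2 * DIM('a) \<le> norm ((x - e i) /\<^sub>R \<rho>)"
        using \<open>1 \<le> \<rho>\<close> unfolding norm_div_\<rho> by (simp add: le_divide_eq dist_norm norm_minus_commute)
      then show "\<phi> i x = 0"
        using h_supp by (force simp: \<phi>_def)
    qed
    show "homeomorphic_map (subtopology euclidean (ball (e i) \<rho>)) (top_of_set (ball 0 1)) (\<phi> i)" for i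
      using homeomorphic_maps_imp_map[OF homeomorphism_imp_homeomorphic_maps[OF hom]] by simp
    show "compactin euclidean (euclidean closure_of ball (e i) \<rho>)" for i
      using \<open>1 \<le> \<rho>\<close> by simp
    have "x \<in> (\<Union>i. ball (e i) \<rho>)" for x
      using cover[of x] by blast
    then show "(\<Union>i\<in>UNIV. ball (e i) \<rho>) = topspace euclidean"
      by auto
    show "\<exists>V. openin euclidean V \<and> x \<in> V \<and> finite {i \<in> UNIV. ball (e i) \<rho> \<inter> V \<noteq> {}}" for x
      using finite_int_lattice_balls_meeting[of e \<rho> x 1] e
      by (intro exI[of _ "ball x 1"]) (auto simp: bij_betw_def)
    show "\<exists>\<delta>. 0 < \<delta> \<and> \<delta> < 1 \<and>
        topspace euclidean \<subseteq> (\<Union>i\<in>UNIV. {x \<in> ball (e i) \<rho>. \<phi> i x \<in> ball 0 (1 - \<delta>)})"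
      using cover by (intro exI[of _ "1/4"]) (simp, blast)
    have "lip_gamma_on \<gamma> L (ball 0 1) (\<phi> j \<circ> inv_into (ball (e i) \<rho>) (\<phi> i))" for i j
    proof (rule lip_gamma_on_cong[OF L(2)[of "(e i - e j) /\<^sub>R \<rho>"]])
      fix y :: 'a assume "y \<in> ball 0 1"
      then have "inv_into (ball (e i) \<rho>) (\<phi> i) y = e i + \<rho> *\<^sub>R y"
        by (rule homeomorphism_inv_into[OF hom])
      then show "h (y + (e i - e j) /\<^sub>R \<rho>) = (\<phi> j \<circ> inv_into (ball (e i) \<rho>) (\<phi> i)) y"
        using \<open>1 \<le> \<rho>\<close> by (simp add: \<phi>_def algebra_simps)
    qed
    then show "\<exists>L>0. \<forall>i\<in>UNIV. \<forall>j\<in>UNIV. lip_gamma_on \<gamma> L (ball 0 1) (\<phi> j \<circ> inv_into (ball (e i) \<rho>) (\<phi> i))"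
      using L(1) by blast
  qed simp_all
qed

lemma lip_gamma_manifold_euclidean:
  assumes "1 \<le> \<gamma>"
  shows "\<exists>U (\<phi> :: nat \<Rightarrow> 'a \<Rightarrow> 'a). lip_gamma_manifold \<gamma> (euclidean :: 'a::euclidean_space topology) UNIV U \<phi>"
proof -
  obtain h :: "'a \<Rightarrow> 'a" where h: "has_bounded_derivatives (Suc (lip_order \<gamma>)) h"
    and h_id: "\<forall>x\<in>ball 0 1. h x = x" and h_supp: "\<forall>x. h x \<noteq> 0 \<longrightarrow> norm x < 2 * DIM('a)"
    using identity_cutoff_exists by blast
  obtain L where "0 < L" and L: "\<forall>a. lip_gamma_on \<gamma> L (ball 0 1) (\<lambda>y. h (y + a))"
    using lip_gamma_on_translates[OF assms h] by blast
  have "bij_betw (from_nat_into int_lattice) UNIV (int_lattice :: 'a set)"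
    by (rule bij_betw_from_nat_into[OF countable_int_lattice infinite_int_lattice])
  from lip_gamma_manifold_lattice_charts[OF h_id h_supp has_bounded_derivatives_imp_continuous_on[OF h]
      \<open>0 < L\<close> spec[OF L] this]
  show ?thesis
    by blast
qed

lemma transition_map_transport:
  assumes hom: "homeomorphic_map (subtopology Y U) (top_of_set T) \<phi>" and U: "U \<subseteq> topspace Y"
    and fg: "\<And>y. y \<in> topspace Y \<Longrightarrow> f (g y) = y" and y: "y \<in> T"
  shows "(\<psi> \<circ> inv_into U \<phi>) y = ((\<psi> \<circ> f) \<circ> inv_into (g ` U) (\<phi> \<circ> f)) y"
proof -
  have "\<phi> ` U = T" and inj: "inj_on \<phi> U"
    using homeomorphic_imp_surjective_map[OF hom] homeomorphic_imp_injective_map[OF hom] U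
    by (simp_all add: inf.absorb2)
  then have y: "y \<in> \<phi> ` U"
    using y by simp
  define u where "u = inv_into U \<phi> y"
  have u: "u \<in> U" "\<phi> u = y"
    using y by (simp_all add: u_def inv_into_into f_inv_into_f)
  have fgU: "f (g v) = v" if "v \<in> U" for v
    using fg[OF subsetD[OF U that]] .
  have "inj_on (\<phi> \<circ> f) (g ` U)"
  proof (rule inj_onI)
    fix a b assume "a \<in> g ` U" "b \<in> g ` U" and eq: "(\<phi> \<circ> f) a = (\<phi> \<circ> f) b"
    then obtain va vb where "va \<in> U" "vb \<in> U" "a = g va" "b = g vb"
      by (elim imageE)
    then show "a = b"
      using eq inj_onD[OF inj] fgU by auto
  qed
  then have "inv_into (g ` U) (\<phi> \<circ> f) y = g u"
    using u fgU[OF u(1)] by (intro inv_into_f_eq) simp_all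
  then show ?thesis
    using fgU[OF u(1)] by (simp add: u_def)
qed

lemma lip_gamma_manifold_homeomorphic_maps:
  fixes f :: "'x \<Rightarrow> 'y" and \<phi> :: "'i \<Rightarrow> 'y \<Rightarrow> 'a::euclidean_space"
  assumes fg: "homeomorphic_maps X Y f g" and M: "lip_gamma_manifold \<gamma> Y I U \<phi>"
  shows "lip_gamma_manifold \<gamma> X I (\<lambda>i. g ` U i) (\<lambda>i. \<phi> i \<circ> f)"
proof -
  have Hausdorff: "Hausdorff_space Y" and second_countable: "second_countable Y"
    and countable: "countable I" and U_open: "\<And>i. i \<in> I \<Longrightarrow> openin Y (U i)"
    and \<phi>_cont: "\<And>i. i \<in> I \<Longrightarrow> continuous_map Y euclidean (\<phi> i)"
    and \<phi>_supp: "\<And>i. i \<in> I \<Longrightarrow> \<exists>K. compactin Y K \<and> (\<forall>y\<in>topspace Y - K. \<phi> i y = 0)"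
    and \<phi>_hom: "\<And>i. i \<in> I \<Longrightarrow> homeomorphic_map (subtopology Y (U i)) (top_of_set (ball 0 1)) (\<phi> i)"
    and U_closure: "\<And>i. i \<in> I \<Longrightarrow> compactin Y (Y closure_of (U i))"
    and U_cover: "(\<Union>i\<in>I. U i) = topspace Y"
    and U_finite: "\<And>y. y \<in> topspace Y \<Longrightarrow> \<exists>V. openin Y V \<and> y \<in> V \<and> finite {i\<in>I. U i \<inter> V \<noteq> {}}"
    and \<delta>: "\<exists>\<delta>. 0 < \<delta> \<and> \<delta> < 1 \<and> topspace Y \<subseteq> (\<Union>i\<in>I. {y\<in>U i. \<phi> i y \<in> ball 0 (1 - \<delta>)})"
    and L: "\<exists>L>0. \<forall>i\<in>I. \<forall>j\<in>I. lip_gamma_on \<gamma> L (ball 0 1) (\<phi> j \<circ> inv_into (U i) (\<phi> i))"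
    using M unfolding lip_gamma_manifold_def by simp_all
  have f: "homeomorphic_map X Y f" and g: "homeomorphic_map Y X g"
    and gf: "\<And>x. x \<in> topspace X \<Longrightarrow> g (f x) = x" and fg': "\<And>y. y \<in> topspace Y \<Longrightarrow> f (g y) = y"
    using fg by (auto simp: homeomorphic_maps_map)
  have fX: "\<And>x. x \<in> topspace X \<Longrightarrow> f x \<in> topspace Y" and gY: "\<And>y. y \<in> topspace Y \<Longrightarrow> g y \<in> topspace X"
    using fg by (auto simp: homeomorphic_maps_def continuous_map_def)
  have U: "U i \<subseteq> topspace Y" if "i \<in> I" for i
    using U_open[OF that] by (rule openin_subset)
  have "X homeomorphic_space Y"
    using fg by (auto simp: homeomorphic_space_def)
  show ?thesis
    unfolding lip_gamma_manifold_def
  proof (intro conjI ballI)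
    show "Hausdorff_space X" "second_countable X"
      using Hausdorff second_countable \<open>X homeomorphic_space Y\<close>
      by (simp_all add: homeomorphic_Hausdorff_space homeomorphic_space_second_countability)
    show "countable I"
      by (rule countable)
    show "openin X (g ` U i)" if "i \<in> I" for i
      using U_open[OF that] homeomorphic_map_openness[OF g U[OF that]] by simp
    show "continuous_map X euclidean (\<phi> i \<circ> f)" if "i \<in> I" for i
      by (rule continuous_map_compose[OF homeomorphic_imp_continuous_map[OF f] \<phi>_cont[OF that]])
    show "\<exists>K. compactin X K \<and> (\<forall>x\<in>topspace X - K. (\<phi> i \<circ> f) x = 0)" if i: "i \<in> I" for i
    proof -
      obtain K where K: "compactin Y K" "\<forall>y\<in>topspace Y - K. \<phi> i y = 0"
        using \<phi>_supp[OF i] by blast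
      have "compactin X (g ` K)"
        using image_compactin[OF K(1) homeomorphic_imp_continuous_map[OF g]] .
      moreover have "(\<phi> i \<circ> f) x = 0" if "x \<in> topspace X - g ` K" for x
        using that K(2) fX gf by (metis DiffD1 DiffD2 DiffI comp_apply image_eqI)
      ultimately show ?thesis
        by blast
    qed
    show "homeomorphic_map (subtopology X (g ` U i)) (top_of_set (ball 0 1)) (\<phi> i \<circ> f)"
      if "i \<in> I" for i
    proof (rule homeomorphic_map_compose[OF _ \<phi>_hom[OF that]])
      show "homeomorphic_map (subtopology X (g ` U i)) (subtopology Y (U i)) f"
        using U[OF that] by (intro homeomorphic_map_subtopologies[OF f]) (force simp: fg' gY)
    qed
    show "compactin X (X closure_of (g ` U i))" if "i \<in> I" for i
      by (simp only: homeomorphic_map_closure_of[OF g U[OF that]]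
          homeomorphic_map_compactness[OF g closure_of_subset_topspace] U_closure[OF that])
    show "(\<Union>i\<in>I. g ` U i) = topspace X"
      unfolding image_UN[symmetric] U_cover by (rule homeomorphic_imp_surjective_map[OF g])
    show "\<exists>V. openin X V \<and> x \<in> V \<and> finite {i \<in> I. g ` U i \<inter> V \<noteq> {}}" if x: "x \<in> topspace X" for x
    proof -
      obtain V where V: "openin Y V" "f x \<in> V" and fin: "finite {i \<in> I. U i \<inter> V \<noteq> {}}"
        using U_finite[OF fX[OF x]] by (elim exE conjE)
      have "{i \<in> I. g ` U i \<inter> {x \<in> topspace X. f x \<in> V} \<noteq> {}} \<subseteq> {i \<in> I. U i \<inter> V \<noteq> {}}"
      proof (rule subsetI)
        fix i assume "i \<in> {i \<in> I. g ` U i \<inter> {x \<in> topspace X. f x \<in> V} \<noteq> {}}"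
        then obtain u where i: "i \<in> I" and u: "u \<in> U i" "f (g u) \<in> V"
          by auto
        then have "u \<in> U i \<inter> V"
          using fg'[OF subsetD[OF U[OF i] u(1)]] by simp
        then show "i \<in> {i \<in> I. U i \<inter> V \<noteq> {}}"
          using i by auto
      qed
      then have "finite {i \<in> I. g ` U i \<inter> {x \<in> topspace X. f x \<in> V} \<noteq> {}}"
        using fin by (rule finite_subset)
      moreover have "openin X {x \<in> topspace X. f x \<in> V}"
        using openin_continuous_map_preimage[OF homeomorphic_imp_continuous_map[OF f] V(1)] .
      ultimately show ?thesis
        using x V(2) by auto
    qed
    show "\<exists>\<delta>>0. \<delta> < 1 \<and> topspace X \<subseteq> (\<Union>i\<in>I. {x \<in> g ` U i. (\<phi> i \<circ> f) x \<in> ball 0 (1 - \<delta>)})"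
    proof -
      obtain \<delta> where "0 < \<delta>" "\<delta> < 1" and \<delta>: "topspace Y \<subseteq> (\<Union>i\<in>I. {y \<in> U i. \<phi> i y \<in> ball 0 (1 - \<delta>)})"
        using \<delta> by blast
      have "topspace X \<subseteq> (\<Union>i\<in>I. {x \<in> g ` U i. (\<phi> i \<circ> f) x \<in> ball 0 (1 - \<delta>)})"
        using \<delta> fX gf by (force intro: rev_image_eqI)
      then show ?thesis
        using \<open>0 < \<delta>\<close> \<open>\<delta> < 1\<close> by blast
    qed
    obtain L where "0 < L" and L: "\<forall>i\<in>I. \<forall>j\<in>I. lip_gamma_on \<gamma> L (ball 0 1) (\<phi> j \<circ> inv_into (U i) (\<phi> i))"
      using L by blast
    have "lip_gamma_on \<gamma> L (ball 0 1) ((\<phi> j \<circ> f) \<circ> inv_into (g ` U i) (\<phi> i \<circ> f))"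
      if ij: "i \<in> I" "j \<in> I" for i j
    proof (rule lip_gamma_on_cong[OF L[rule_format, OF ij]])
      fix y :: 'a assume "y \<in> ball 0 1"
      from transition_map_transport[where f=f and g=g, OF \<phi>_hom[OF ij(1)] U[OF ij(1)] fg' this]
      show "(\<phi> j \<circ> inv_into (U i) (\<phi> i)) y = ((\<phi> j \<circ> f) \<circ> inv_into (g ` U i) (\<phi> i \<circ> f)) y" .
    qed
    then show "\<exists>L>0. \<forall>i\<in>I. \<forall>j\<in>I. lip_gamma_on \<gamma> L (ball 0 1) ((\<phi> j \<circ> f) \<circ> inv_into (g ` U i) (\<phi> i \<circ> f))"
      using \<open>0 < L\<close> by blast
  qed
qed

theorem mainTheorem5:
  fixes \<gamma> :: real
  assumes "\<gamma> \<ge> 1"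
  shows "\<exists>(I :: nat set) (U :: nat \<Rightarrow> (real^'n) set) (\<phi> :: nat \<Rightarrow> real^'n \<Rightarrow> real^'n).
           lip_gamma_manifold \<gamma> (top_of_set (ball (0::real^'n) 1)) I U \<phi>"
proof -
  obtain U and \<phi> :: "nat \<Rightarrow> real^'n \<Rightarrow> real^'n"
    where M: "lip_gamma_manifold \<gamma> (euclidean :: (real^'n) topology) UNIV U \<phi>"
    using lip_gamma_manifold_euclidean[OF assms] by blast
  obtain \<Theta> \<Psi> where "homeomorphism (ball (0::real^'n) 1) (UNIV :: (real^'n) set) \<Theta> \<Psi>"
    using homeomorphic_ball_UNIV[of 1 "0::real^'n"] by (auto simp: homeomorphic_def)
  then have "homeomorphic_maps (top_of_set (ball (0::real^'n) 1)) euclidean \<Theta> \<Psi>"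
    using homeomorphism_imp_homeomorphic_maps by fastforce
  then show ?thesis
    using lip_gamma_manifold_homeomorphic_maps[OF _ M] by blast
qed

end
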